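(* The size $z_{SS}$ of the non-self-referencing LZSS factorization satisfies: substitutions: $\limsup_{n\to\infty}\mathsf{MS}_{\mathrm{sub}}(z_{SS},n)\le 3$ and $\mathsf{AS}_{\mathrm{sub}}(z_{SS},n)\le 2z_{SS}-2$; insertions: $\mathsf{MS}_{\mathrm{ins}}(z_{SS},n)\le 2$ and $\mathsf{AS}_{\mathrm{ins}}(z_{SS},n)\le z_{SS}$; deletions: $\limsup_{n\to\infty}\mathsf{MS}_{\mathrm{del}}(z_{SS},n)\le 3$ and $\mathsf{AS}_{\mathrm{del}}(z_{SS},n)\le 2z_{SS}-3$, where $\mathsf{AS}_\ast(z_{SS},n)\le a z_{SS}-c$ means $z_{SS}(T')-z_{SS}(T)\le a\,z_{SS}(T)-c$ for all $T$ of length $n$ and all $T'$ obtained from $T$ by one edit of that type.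
   Context: Strings are over an alphabet $\Sigma$; $\mathsf{ed}$ is the edit distance. $\mathsf{MS}_{\mathrm{sub}}(C,n)=\max_{T\in\Sigma^n}\{C(T')/C(T): T'\in\Sigma^n,\ \mathsf{ed}(T,T')=1\}$, with $\mathsf{MS}_{\mathrm{ins}},\mathsf{MS}_{\mathrm{del}}$ analogous for $T'$ of length $n+1$, resp. $n-1$, and $\mathsf{AS}_\ast$ analogous with $C(T')-C(T)$. The non-self-referencing LZSS factorization of $T$ is $T=f_1\cdots f_z$ where each $f_i$ is either the first occurrence in $T$ of a character, or the longest prefix of $f_i\cdots f_z$ that occurs as a substring of $f_1\cdots f_{i-1}$; $z_{SS}(T)=z$. *)

theory Defs
  imports Complex_Main "HOL-Library.Sublist" "HOL-Library.Extended_Real" "HOL-Library.Liminf_Limsup"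
begin

fun ed :: "'a list \<Rightarrow> 'a list \<Rightarrow> nat" where
  "ed [] ys = length ys"
| "ed xs [] = length xs"
| "ed (x # xs) (y # ys) =
     min (min (ed xs (y # ys) + 1) (ed (x # xs) ys + 1))
         (ed xs ys + (if x = y then 0 else 1))"

definition is_lzss_fact :: "'a list \<Rightarrow> 'a list list \<Rightarrow> bool" where
  "is_lzss_fact T fs \<longleftrightarrow> concat fs = T \<and>
     (\<forall>i < length fs.
        let P = concat (take i fs); S = concat (drop i fs); f = fs ! i in
        (length f = 1 \<and> hd f \<notin> set P) \<or>
        (f \<noteq> [] \<and> prefix f S \<and> sublist f P \<and>
         (\<forall>g. prefix g S \<and> sublist g P \<longrightarrow> length g \<le> length f)))"

definition z_SS :: "'a list \<Rightarrow> nat" where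
  "z_SS T = (THE k. \<exists>fs. is_lzss_fact T fs \<and> length fs = k)"

definition MS_sub :: "('a list \<Rightarrow> nat) \<Rightarrow> nat \<Rightarrow> ereal" where
  "MS_sub C n = Sup {ereal (real (C T') / real (C T)) | T T'.
      length T = n \<and> length T' = n \<and> ed T T' = 1}"

definition MS_ins :: "('a list \<Rightarrow> nat) \<Rightarrow> nat \<Rightarrow> ereal" where
  "MS_ins C n = Sup {ereal (real (C T') / real (C T)) | T T'.
      length T = n \<and> length T' = n + 1 \<and> ed T T' = 1}"

definition MS_del :: "('a list \<Rightarrow> nat) \<Rightarrow> nat \<Rightarrow> ereal" where
  "MS_del C n = Sup {ereal (real (C T') / real (C T)) | T T'.
      length T = n \<and> length T' + 1 = n \<and> ed T T' = 1}"

end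

theory Submission
  imports Defs
begin

(* Call a parsing of T valid if each phrase has length at most one or occurs in the text
   before it. The non-self-referencing LZSS factorization is greedy, hence a shortest valid
   parsing, so z_SS T is the least length of a valid parsing of T. Write T = u m v and
   T' = u m' v with |m|, |m'| <= 1. From the LZSS factorization of T we get a valid parsing
   of T': phrases ending before the edit are kept, the phrase x m y containing it becomes
   x, m', y, and each later phrase, whose earlier occurrence may straddle m, is cut into its
   parts inside u, inside m and inside the rest, i.e. into at most 2 + |m| valid phrases.
   Counting gives z_SS T' <= 3 z_SS T - 2, 2 z_SS T and 3 z_SS T - 3 for a substitution,
   an insertion and a deletion. *)

lemma ed_self [simp]: "ed xs xs = 0"
  by (induction xs) auto

lemma ed_eq_0_iff [simp]: "ed xs ys = 0 \<longleftrightarrow> xs = ys"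
proof
  show "ed xs ys = 0 \<Longrightarrow> xs = ys"
    by (induction xs ys rule: ed.induct) (auto simp: min_def split: if_splits)
qed simp

lemma ed_eq_1_decomp:
  "ed xs ys = 1 \<Longrightarrow> \<exists>u a b v. xs = u @ a @ v \<and> ys = u @ b @ v \<and>
     length a \<le> 1 \<and> length b \<le> 1 \<and> a \<noteq> b"
proof (induction xs ys rule: ed.induct)
  case (1 ys)
  then show ?case by (intro exI[of _ "[]"] exI[of _ ys]) auto
next
  case (2 x xs)
  then show ?case by (intro exI[of _ "[]"] exI[of _ "[x]"]) auto
next
  case (3 x xs y ys)
  then consider "xs = y # ys" | "x # xs = ys" | "x = y" "ed xs ys = 1" | "x \<noteq> y" "xs = ys"
    by (auto simp: min_def split: if_splits)
  then show ?case
  proof cases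
    case 1
    then show ?thesis by (intro exI[of _ "[]"] exI[of _ "[x]"] exI[of _ "[]"] exI[of _ xs]) auto
  next
    case 2
    then show ?thesis by (intro exI[of _ "[]"] exI[of _ "[]"] exI[of _ "[y]"] exI[of _ ys]) auto
  next
    case 3
    with "3.IH"(3) obtain u a b v where "xs = u @ a @ v" "ys = u @ b @ v"
      "length a \<le> 1" "length b \<le> 1" "a \<noteq> b" by blast
    with \<open>x = y\<close> show ?thesis
      by (intro exI[of _ "x # u"] exI[of _ a] exI[of _ b] exI[of _ v]) auto
  next
    case 4
    then show ?thesis by (intro exI[of _ "[]"] exI[of _ "[x]"] exI[of _ "[y]"] exI[of _ xs]) auto
  qed
qed

definition valid_parsing :: "'a list list \<Rightarrow> bool" where
  "valid_parsing ps \<longleftrightarrow>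
     (\<forall>i<length ps. length (ps ! i) \<le> 1 \<or> sublist (ps ! i) (concat (take i ps)))"

lemma valid_parsing_Nil [simp]: "valid_parsing []"
  by (simp add: valid_parsing_def)

lemma valid_parsing_snoc [simp]:
  "valid_parsing (ps @ [p]) \<longleftrightarrow> valid_parsing ps \<and> (length p \<le> 1 \<or> sublist p (concat ps))"
  by (auto simp: valid_parsing_def nth_append less_Suc_eq)

lemma valid_parsing_appendD: "valid_parsing (ps @ qs) \<Longrightarrow> valid_parsing ps"
  by (induction qs rule: rev_induct) (simp_all flip: append_assoc)

lemma valid_parsing_append_phrases:
  assumes "valid_parsing ps" "\<And>q. q \<in> set qs \<Longrightarrow> length q \<le> 1 \<or> sublist q (concat ps)"
  shows "valid_parsing (ps @ qs)"
  using assms(2)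
proof (induction qs rule: rev_induct)
  case (snoc q qs)
  have "sublist (concat ps) (concat (ps @ qs))" by simp
  moreover have "length q \<le> 1 \<or> sublist q (concat ps)" using snoc.prems by simp
  ultimately have "length q \<le> 1 \<or> sublist q (concat (ps @ qs))"
    using sublist_order.order.trans by blast
  with snoc show ?case by (simp flip: append_assoc)
qed (simp add: assms(1))

lemma sublist_append_split:
  "sublist w (xs @ ys) \<Longrightarrow> \<exists>w1 w2. w = w1 @ w2 \<and> sublist w1 xs \<and> sublist w2 ys"
  unfolding sublist_append
  by (metis append_Nil append_Nil2 sublist_Nil_left prefix_imp_sublist suffix_imp_sublist)

lemma phrase_reparse_after_edit:
  assumes "length w \<le> 1 \<or> sublist w (u @ m @ W)"
  shows "\<exists>qs. concat qs = w \<and> length qs \<le> 2 + length m \<and>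
           (\<forall>q\<in>set qs. length q \<le> 1 \<or> sublist q (u @ m' @ W))"
proof (cases "length w \<le> 1")
  case True
  then show ?thesis by (intro exI[of _ "[w]"]) auto
next
  case False
  with assms obtain w1 w2 w3 where w: "w = w1 @ w2 @ w3"
    and "sublist w1 u" "sublist w2 m" "sublist w3 W"
    by (metis sublist_append_split)
  moreover have "sublist W (u @ m' @ W)" "sublist u (u @ m' @ W)"
    using sublist_append_leftI[of W "u @ m'"] by simp_all
  ultimately have "sublist w1 (u @ m' @ W)" "sublist w3 (u @ m' @ W)" "length w2 \<le> length m"
    by (auto intro: sublist_order.order.trans sublist_length_le)
  with w show ?thesis
    by (intro exI[of _ "[w1] @ map (\<lambda>c. [c]) w2 @ [w3]"]) (auto simp: concat_map_singleton)
qed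

lemma valid_parsing_reparse_suffix:
  assumes "valid_parsing (pre @ hs)" "concat pre = u @ m @ w"
    and "valid_parsing ps" "concat ps = u @ m' @ w"
  shows "\<exists>qs. valid_parsing (ps @ qs) \<and> concat qs = concat hs \<and>
           length qs \<le> (2 + length m) * length hs"
  using assms(1)
proof (induction hs rule: rev_induct)
  case Nil
  show ?case using assms(3) by (intro exI[of _ "[]"]) simp
next
  case (snoc h hs)
  then have "valid_parsing (pre @ hs)" and "length h \<le> 1 \<or> sublist h (concat (pre @ hs))"
    by (simp_all flip: append_assoc)
  then obtain qs where qs: "valid_parsing (ps @ qs)" "concat qs = concat hs"
      "length qs \<le> (2 + length m) * length hs"
    and h: "length h \<le> 1 \<or> sublist h (u @ m @ (w @ concat hs))"
    using snoc.IH assms(2) by auto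
  obtain rs where rs: "concat rs = h" "length rs \<le> 2 + length m"
      "\<forall>r\<in>set rs. length r \<le> 1 \<or> sublist r (u @ m' @ (w @ concat hs))"
    using phrase_reparse_after_edit[OF h] by blast
  have "valid_parsing ((ps @ qs) @ rs)"
    using valid_parsing_append_phrases[OF qs(1)] rs(3) qs(2) assms(4) by simp
  with qs rs show ?case by (intro exI[of _ "qs @ rs"]) auto
qed

lemma concat_split_at_phrase:
  "p < length (concat fs) \<Longrightarrow>
     \<exists>gs x y hs. fs = gs @ (x @ y) # hs \<and> y \<noteq> [] \<and> concat gs @ x = take p (concat fs)"
proof (induction fs arbitrary: p)
  case (Cons f fs)
  show ?case
  proof (cases "p < length f")
    case True
    then show ?thesis by (intro exI[of _ "[]"] exI[of _ "take p f"] exI[of _ "drop p f"] exI[of _ fs]) auto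
  next
    case False
    with Cons.prems have "p - length f < length (concat fs)" by simp
    then obtain gs x y hs where
      "fs = gs @ (x @ y) # hs" "y \<noteq> []" "concat gs @ x = take (p - length f) (concat fs)"
      using Cons.IH by blast
    with False show ?thesis by (intro exI[of _ "f # gs"]) auto
  qed
qed simp

lemma valid_parsing_edit_phrase:
  assumes "valid_parsing (gs @ [x @ m @ y])" "length m' \<le> 1"
  defines "B \<equiv> filter (\<lambda>q. q \<noteq> []) [x, m', y]"
  shows "valid_parsing (gs @ B)"
    and "gs = [] \<Longrightarrow> length B + length m \<le> length m' + 1"
proof -
  have f: "valid_parsing gs" "length (x @ m @ y) \<le> 1 \<or> sublist (x @ m @ y) (concat gs)"
    using assms(1) by simp_all
  show "valid_parsing (gs @ B)"
  proof (rule valid_parsing_append_phrases[OF f(1)])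
    fix q assume "q \<in> set B"
    then have "q = m' \<or> sublist q (x @ m @ y)"
      using sublist_appendI[of y "x @ m" "[]"] by (auto simp: B_def split: if_splits)
    with f(2) assms(2) show "length q \<le> 1 \<or> sublist q (concat gs)"
      by (metis le_trans sublist_length_le sublist_order.order.trans)
  qed
  assume "gs = []"
  with f(2) have "length x + length m + length y \<le> 1" by auto
  with assms(2) show "length B + length m \<le> length m' + 1"
    by (cases x; cases y; cases m'; cases m) (auto simp: B_def)
qed

lemma valid_parsing_edit:
  assumes fs: "valid_parsing fs" "concat fs = u @ m @ v"
    and m: "length m \<le> 1" "length m' \<le> 1" "m @ v \<noteq> []"
  shows "\<exists>ps. valid_parsing ps \<and> concat ps = u @ m' @ v \<and>
           length ps + length m \<le> length m' + 1 + (2 + length m) * (length fs - 1)"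
proof -
  have "length u < length (concat fs)" using fs(2) m(3) by simp
  then obtain gs x y hs where split: "fs = gs @ (x @ y) # hs" "y \<noteq> []" "concat gs @ x = u"
    using concat_split_at_phrase[of "length u" fs] fs(2) by auto
  obtain y' where y': "y = m @ y'" "v = y' @ concat hs"
  proof (cases m)
    case (Cons c r)
    with m(1) fs(2) split show ?thesis by (cases y) (auto intro: that)
  qed (use that fs(2) split in auto)
  define B where "B = filter (\<lambda>q. q \<noteq> []) [x, m', y']"
  have "valid_parsing (gs @ [x @ m @ y'])"
    using fs(1) split(1) y'(1) valid_parsing_appendD[of "gs @ [x @ m @ y']" hs] by simp
  note edited = valid_parsing_edit_phrase[OF this m(2), folded B_def]
  have concat_B: "concat (gs @ B) = u @ m' @ y'" using split(3) by (auto simp: B_def)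
  moreover have "valid_parsing ((gs @ [x @ m @ y']) @ hs)" using fs(1) split(1) y'(1) by simp
  moreover have "concat (gs @ [x @ m @ y']) = u @ m @ y'" using split(3) by simp
  ultimately obtain qs where qs: "valid_parsing ((gs @ B) @ qs)" "concat qs = concat hs"
      "length qs \<le> (2 + length m) * length hs"
    using valid_parsing_reparse_suffix edited(1) by blast
  have "length B \<le> 2 + length m'" using m(2) by (cases m') (auto simp: B_def)
  moreover have "length gs + length m + 2 \<le> 1 + (2 + length m) * length gs" if "gs \<noteq> []"
    using that by (cases gs) auto
  moreover have "(2 + length m) * (length fs - 1)
      = (2 + length m) * length gs + (2 + length m) * length hs"
    using split(1) by (simp add: algebra_simps)
  ultimately have "length ((gs @ B) @ qs) + length m
      \<le> length m' + 1 + (2 + length m) * (length fs - 1)"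
    using qs(3) edited(2) by (cases "gs = []") auto
  with qs(1,2) y'(2) concat_B show ?thesis by (intro exI[of _ "(gs @ B) @ qs"]) auto
qed

definition lzss_phrase :: "'a list \<Rightarrow> 'a list \<Rightarrow> 'a list \<Rightarrow> bool" where
  "lzss_phrase P S f \<longleftrightarrow> (length f = 1 \<and> hd f \<notin> set P) \<or>
     (f \<noteq> [] \<and> prefix f S \<and> sublist f P \<and>
      (\<forall>g. prefix g S \<and> sublist g P \<longrightarrow> length g \<le> length f))"

lemma is_lzss_fact_iff:
  "is_lzss_fact T fs \<longleftrightarrow> concat fs = T \<and>
     (\<forall>i<length fs. lzss_phrase (concat (take i fs)) (concat (drop i fs)) (fs ! i))"
  unfolding is_lzss_fact_def lzss_phrase_def Let_def by simp

lemma lzss_phrase_nonempty: "lzss_phrase P S f \<Longrightarrow> f \<noteq> []"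
  unfolding lzss_phrase_def by auto

lemma lzss_phrase_exists:
  assumes "S \<noteq> []"
  shows "\<exists>f. prefix f S \<and> lzss_phrase P S f"
proof (cases "hd S \<in> set P")
  case False
  with assms show ?thesis
    by (intro exI[of _ "[hd S]"]) (auto simp: lzss_phrase_def prefix_def intro: exI[of _ "tl S"])
next
  case True
  let ?copy = "\<lambda>g. prefix g S \<and> sublist g P"
  have "?copy [hd S]"
    using assms True sublist_appendI[of "[hd S]"]
    by (auto simp: prefix_def in_set_conv_decomp intro: exI[of _ "tl S"])
  moreover have "\<forall>g. ?copy g \<longrightarrow> length g < Suc (length S)"
    using prefix_length_le by (auto simp: less_Suc_eq_le)
  ultimately obtain f where "?copy f" "\<forall>g. ?copy g \<longrightarrow> length g \<le> length f"
    using Lattices_Big.ex_has_greatest_nat[of ?copy "[hd S]" length] by blast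
  moreover have "f \<noteq> []" using calculation \<open>?copy [hd S]\<close> by force
  ultimately show ?thesis by (auto simp: lzss_phrase_def)
qed

lemma lzss_parse_exists:
  "\<exists>fs. concat fs = S \<and>
     (\<forall>i<length fs. lzss_phrase (P @ concat (take i fs)) (concat (drop i fs)) (fs ! i))"
proof (induction "length S" arbitrary: S P rule: less_induct)
  case less
  show ?case
  proof (cases "S = []")
    case False
    then obtain f where f: "prefix f S" "lzss_phrase P S f" using lzss_phrase_exists by blast
    then obtain S' where S': "S = f @ S'" by (auto simp: prefix_def)
    have "length S' < length S" using S' lzss_phrase_nonempty[OF f(2)] by simp
    then obtain fs where "concat fs = S'"
      "\<forall>i<length fs. lzss_phrase ((P @ f) @ concat (take i fs)) (concat (drop i fs)) (fs ! i)"
      using less by blast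
    with f(2) S' show ?thesis
      by (intro exI[of _ "f # fs"]) (auto simp: nth_Cons' less_Suc_eq_0_disj)
  qed (intro exI[of _ "[]"], simp)
qed

lemma lzss_fact_exists: "\<exists>fs. is_lzss_fact T fs"
  using lzss_parse_exists[of T "[]"] by (simp add: is_lzss_fact_iff)

lemma lzss_phrase_reaches_past:
  assumes f: "lzss_phrase (take p T) (drop p T) f" "prefix f (drop p T)"
    and q: "a \<le> p" "prefix q (drop a T)" "length q \<le> 1 \<or> sublist q (take a T)"
  shows "a + length q \<le> p + length f"
proof (rule ccontr)
  assume far: "\<not> a + length q \<le> p + length f"
  have "f \<noteq> []" using lzss_phrase_nonempty[OF f(1)] .
  with far q(1) have "sublist q (take a T)" using q(3) by (cases f) auto
  \<comment> \<open>the part g of q beyond position p was available as a copy to the greedy phrase f\<close>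
  define g where "g = drop (p - a) q"
  have g: "g \<noteq> []" "length g = a + length q - p" using far q(1) unfolding g_def by auto
  obtain r where "drop a T = q @ r" using q(2) by (auto simp: prefix_def)
  moreover have "drop p T = drop (p - a) (drop a T)" using q(1) by simp
  ultimately have "drop p T = g @ r" using far unfolding g_def by simp
  then have g_prefix: "prefix g (drop p T)" by simp
  have "prefix (take a (take p T)) (take p T)" by (rule take_is_prefix)
  then have "prefix (take a T) (take p T)" using q(1) by (simp add: min_def)
  then have g_copy: "sublist g (take p T)"
    using \<open>sublist q (take a T)\<close> unfolding g_def
    by (meson prefix_imp_sublist sublist_drop sublist_order.order.trans)
  have "hd f = hd (drop p T)" using f(2) \<open>f \<noteq> []\<close> by (auto simp: prefix_def)
  also have "\<dots> = hd g" using g_prefix g(1) by (auto simp: prefix_def)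
  finally have "hd f = hd g" .
  moreover have "hd g \<in> set (take p T)" using hd_in_set[OF g(1)] set_mono_sublist[OF g_copy] by blast
  ultimately have "hd f \<in> set (take p T)" by simp
  then have "length g \<le> length f" using f(1) g_prefix g_copy unfolding lzss_phrase_def by auto
  with g(2) far show False by linarith
qed

lemma concat_drop_conv_nth:
  "k < length xs \<Longrightarrow> concat (drop k xs) = xs ! k @ concat (drop (Suc k) xs)"
  by (metis Cons_nth_drop_Suc concat.simps(2))

lemma concat_take_drop: "concat xs = concat (take k xs) @ concat (drop k xs)"
  by (simp flip: concat_append)

lemma lzss_fact_shortest:
  assumes fs: "is_lzss_fact T fs" and ps: "valid_parsing ps" "concat ps = T"
  shows "length fs \<le> length ps"
proof -
  have T: "concat fs = T" using fs by (simp add: is_lzss_fact_iff)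
  have ahead: "length (concat (take k ps)) \<le> length (concat (take k fs))"
    if "k \<le> length ps" "k \<le> length fs" for k
    using that
  proof (induction k)
    case (Suc k)
    let ?a = "length (concat (take k ps))" and ?p = "length (concat (take k fs))"
    have fk: "take ?p T = concat (take k fs)" "drop ?p T = fs ! k @ concat (drop (Suc k) fs)"
      using T concat_take_drop[of fs k] concat_drop_conv_nth[of k fs] Suc.prems by auto
    have pk: "take ?a T = concat (take k ps)" "drop ?a T = ps ! k @ concat (drop (Suc k) ps)"
      using ps(2) concat_take_drop[of ps k] concat_drop_conv_nth[of k ps] Suc.prems by auto
    have "lzss_phrase (take ?p T) (drop ?p T) (fs ! k)"
      using fs Suc.prems fk by (simp add: is_lzss_fact_iff concat_drop_conv_nth)
    moreover have "prefix (fs ! k) (drop ?p T)" "prefix (ps ! k) (drop ?a T)"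
      using fk(2) pk(2) by simp_all
    moreover have "length (ps ! k) \<le> 1 \<or> sublist (ps ! k) (take ?a T)"
      using ps(1) Suc.prems pk(1) by (simp add: valid_parsing_def)
    moreover have "?a \<le> ?p" using Suc by simp
    ultimately have "?a + length (ps ! k) \<le> ?p + length (fs ! k)"
      by (intro lzss_phrase_reaches_past)
    with Suc.prems show ?case by (simp add: take_Suc_conv_app_nth)
  qed simp
  show ?thesis
  proof (rule ccontr)
    assume "\<not> length fs \<le> length ps"
    then have k: "length ps < length fs" by simp
    then have "fs ! length ps \<noteq> []"
      using fs lzss_phrase_nonempty by (auto simp: is_lzss_fact_iff)
    moreover have "length T = length (concat (take (length ps) fs)) + length (fs ! length ps)
        + length (concat (drop (Suc (length ps)) fs))"
      using arg_cong[OF concat_take_drop, of length fs "length ps"] concat_drop_conv_nth[OF k] T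
      by simp
    moreover have "length T \<le> length (concat (take (length ps) fs))"
      using ahead[of "length ps"] k ps(2) by simp
    ultimately show False by simp
  qed
qed

lemma lzss_fact_valid_parsing: "is_lzss_fact T fs \<Longrightarrow> valid_parsing fs"
  by (auto simp: is_lzss_fact_iff valid_parsing_def lzss_phrase_def)

lemma z_SS_eq_length: "is_lzss_fact T fs \<Longrightarrow> z_SS T = length fs"
  unfolding z_SS_def
proof (rule the_equality)
  fix k assume "is_lzss_fact T fs" "\<exists>fs'. is_lzss_fact T fs' \<and> length fs' = k"
  then show "k = length fs"
    by (metis le_antisym is_lzss_fact_iff lzss_fact_shortest lzss_fact_valid_parsing)
qed blast

lemma obtain_lzss_fact:
  obtains fs where "is_lzss_fact T fs" "z_SS T = length fs"
  using lzss_fact_exists z_SS_eq_length by blast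

lemma z_SS_le_valid_parsing: "valid_parsing ps \<Longrightarrow> z_SS (concat ps) \<le> length ps"
  by (metis obtain_lzss_fact lzss_fact_shortest)

lemma z_SS_Nil [simp]: "z_SS [] = 0"
  using z_SS_eq_length[of "[]" "[]"] by (simp add: is_lzss_fact_iff)

lemma z_SS_pos: "T \<noteq> [] \<Longrightarrow> 0 < z_SS T"
  by (metis obtain_lzss_fact is_lzss_fact_iff concat.simps(1) length_greater_0_conv)

lemma z_SS_snoc_le: "z_SS (T @ [b]) \<le> z_SS T + 1"
proof -
  obtain fs where fs: "is_lzss_fact T fs" "z_SS T = length fs" by (rule obtain_lzss_fact)
  then have "valid_parsing (fs @ [[b]])" and "concat (fs @ [[b]]) = T @ [b]"
    by (simp_all add: lzss_fact_valid_parsing is_lzss_fact_iff)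
  with fs(2) show ?thesis by (metis z_SS_le_valid_parsing length_append_singleton Suc_eq_plus1)
qed

lemma z_SS_edit_le:
  assumes "length m \<le> 1" "length m' \<le> 1" "m @ v \<noteq> []"
  shows "z_SS (u @ m' @ v) + length m \<le> length m' + 1 + (2 + length m) * (z_SS (u @ m @ v) - 1)"
proof -
  obtain fs where fs: "is_lzss_fact (u @ m @ v) fs" "z_SS (u @ m @ v) = length fs"
    by (rule obtain_lzss_fact)
  then obtain ps where "valid_parsing ps" "concat ps = u @ m' @ v"
      "length ps + length m \<le> length m' + 1 + (2 + length m) * (length fs - 1)"
    using valid_parsing_edit[OF lzss_fact_valid_parsing[OF fs(1)] _ assms]
    by (auto simp: is_lzss_fact_iff)
  with fs(2) show ?thesis using z_SS_le_valid_parsing by fastforce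
qed

lemma z_SS_substitution:
  assumes "length T' = length T" "ed T T' = 1"
  shows "z_SS T' + 2 \<le> 3 * z_SS T"
proof -
  obtain u a b v where e: "T = u @ a @ v" "T' = u @ b @ v"
      "length a \<le> 1" "length b \<le> 1" "a \<noteq> b"
    using ed_eq_1_decomp[OF assms(2)] by blast
  then have "length a = 1" "length b = 1" using assms(1) by (cases a; cases b; auto)+
  then show ?thesis using z_SS_edit_le[of a b v u] z_SS_pos[of T] e by (cases a) auto
qed

lemma z_SS_insertion:
  assumes "T \<noteq> []" "length T' = length T + 1" "ed T T' = 1"
  shows "z_SS T' \<le> 2 * z_SS T"
proof -
  obtain u a b v where e: "T = u @ a @ v" "T' = u @ b @ v" "length a \<le> 1" "length b \<le> 1"
    using ed_eq_1_decomp[OF assms(3)] by blast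
  then have "a = []" "length b = 1" using assms(2) by auto
  then obtain c where "b = [c]" by (auto simp: length_Suc_conv)
  show ?thesis
  proof (cases "v = []")
    case True
    then show ?thesis
      using z_SS_snoc_le[of T c] z_SS_pos[OF assms(1)] e \<open>a = []\<close> \<open>b = [c]\<close> by simp
  next
    case False
    then show ?thesis
      using z_SS_edit_le[of a b v u] z_SS_pos[OF assms(1)] e \<open>a = []\<close> \<open>length b = 1\<close>
      by simp
  qed
qed

lemma z_SS_deletion:
  assumes "length T' + 1 = length T" "ed T T' = 1"
  shows "z_SS T' + 3 \<le> 3 * z_SS T"
proof -
  obtain u a b v where e: "T = u @ a @ v" "T' = u @ b @ v" "length a \<le> 1" "length b \<le> 1"
    using ed_eq_1_decomp[OF assms(2)] by blast
  then have "length a = 1" "b = []" using assms(1) by (cases b; auto)+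
  then show ?thesis using z_SS_edit_le[of a b v u] z_SS_pos[of T] e by (cases a) auto
qed

lemma Sup_ratio_le:
  fixes C :: "'a \<Rightarrow> nat"
  assumes "\<And>T T'. P T T' \<Longrightarrow> 0 < C T \<Longrightarrow> C T' \<le> c * C T"
  shows "Sup {ereal (real (C T') / real (C T)) | T T'. P T T'} \<le> ereal (real c)"
proof (rule Sup_least, clarify)
  fix T T' assume "P T T'"
  have "real (C T') / real (C T) \<le> real c"
  proof (cases "C T = 0")
    case False
    with assms \<open>P T T'\<close> have "real (C T') \<le> real c * real (C T)"
      by (metis gr0I of_nat_le_iff of_nat_mult)
    with False show ?thesis by (simp add: divide_le_eq)
  qed simp \<comment> \<open>C T = 0 makes the ratio 0\<close>
  then show "ereal (real (C T') / real (C T)) \<le> ereal (real c)" by simp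
qed

lemma MS_sub_z_SS_le: "MS_sub (z_SS :: 'a list \<Rightarrow> nat) n \<le> 3"
proof -
  have "MS_sub (z_SS :: 'a list \<Rightarrow> nat) n \<le> ereal (real 3)"
    unfolding MS_sub_def
  proof (rule Sup_ratio_le)
    fix T T' :: "'a list" assume "length T = n \<and> length T' = n \<and> ed T T' = 1"
    then have "z_SS T' + 2 \<le> 3 * z_SS T" by (intro z_SS_substitution) auto
    then show "z_SS T' \<le> 3 * z_SS T" by simp
  qed
  then show ?thesis by simp
qed

lemma MS_ins_z_SS_le: "MS_ins (z_SS :: 'a list \<Rightarrow> nat) n \<le> 2"
proof -
  have "MS_ins (z_SS :: 'a list \<Rightarrow> nat) n \<le> ereal (real 2)"
    unfolding MS_ins_def
  proof (rule Sup_ratio_le)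
    fix T T' :: "'a list"
    assume "length T = n \<and> length T' = n + 1 \<and> ed T T' = 1" "0 < z_SS T"
    then show "z_SS T' \<le> 2 * z_SS T" by (intro z_SS_insertion) auto
  qed
  then show ?thesis by simp
qed

lemma MS_del_z_SS_le: "MS_del (z_SS :: 'a list \<Rightarrow> nat) n \<le> 3"
proof -
  have "MS_del (z_SS :: 'a list \<Rightarrow> nat) n \<le> ereal (real 3)"
    unfolding MS_del_def
  proof (rule Sup_ratio_le)
    fix T T' :: "'a list" assume "length T = n \<and> length T' + 1 = n \<and> ed T T' = 1"
    then have "z_SS T' + 3 \<le> 3 * z_SS T" by (intro z_SS_deletion) auto
    then show "z_SS T' \<le> 3 * z_SS T" by simp
  qed
  then show ?thesis by simp
qed

theorem mainTheorem13:
  shows "limsup (\<lambda>n. MS_sub (z_SS :: 'a list \<Rightarrow> nat) n) \<le> 3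
    \<and> (\<forall>(T :: 'a list) T'. length T' = length T \<and> ed T T' = 1 \<longrightarrow>
          int (z_SS T') - int (z_SS T) \<le> 2 * int (z_SS T) - 2)
    \<and> (\<forall>n. MS_ins (z_SS :: 'a list \<Rightarrow> nat) n \<le> 2)
    \<and> (\<forall>(T :: 'a list) T'. T \<noteq> [] \<and> length T' = length T + 1 \<and> ed T T' = 1 \<longrightarrow>
          int (z_SS T') - int (z_SS T) \<le> int (z_SS T))
    \<and> limsup (\<lambda>n. MS_del (z_SS :: 'a list \<Rightarrow> nat) n) \<le> 3
    \<and> (\<forall>(T :: 'a list) T'. length T' + 1 = length T \<and> ed T T' = 1 \<longrightarrow>
          int (z_SS T') - int (z_SS T) \<le> 2 * int (z_SS T) - 3)"
proof (intro conjI allI impI)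
  show "limsup (\<lambda>n. MS_sub (z_SS :: 'a list \<Rightarrow> nat) n) \<le> 3"
    by (intro Limsup_bounded always_eventually allI MS_sub_z_SS_le)
  show "limsup (\<lambda>n. MS_del (z_SS :: 'a list \<Rightarrow> nat) n) \<le> 3"
    by (intro Limsup_bounded always_eventually allI MS_del_z_SS_le)
  show "MS_ins (z_SS :: 'a list \<Rightarrow> nat) n \<le> 2" for n
    by (rule MS_ins_z_SS_le)
next
  fix T T' :: "'a list"
  assume "length T' = length T \<and> ed T T' = 1"
  then have "z_SS T' + 2 \<le> 3 * z_SS T" using z_SS_substitution by blast
  then show "int (z_SS T') - int (z_SS T) \<le> 2 * int (z_SS T) - 2" by linarith
next
  fix T T' :: "'a list"
  assume "T \<noteq> [] \<and> length T' = length T + 1 \<and> ed T T' = 1"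
  then have "z_SS T' \<le> 2 * z_SS T" using z_SS_insertion by blast
  then show "int (z_SS T') - int (z_SS T) \<le> int (z_SS T)" by linarith
next
  fix T T' :: "'a list"
  assume "length T' + 1 = length T \<and> ed T T' = 1"
  then have "z_SS T' + 3 \<le> 3 * z_SS T" using z_SS_deletion by blast
  then show "int (z_SS T') - int (z_SS T) \<le> 2 * int (z_SS T) - 3" by linarith
qed

end
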